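(* Let $N_1,N_3,J\in\mathbb{N}$ and let $\hat{\mathcal{X}}\in\mathbb{R}^{N_1\times J\times N_3}$ be a real third-order tensor with frontal slices $\hat{\mathcal{X}}_j\in\mathbb{R}^{N_1\times N_3}$ ($j=1,\dots,J$), where $(\hat{\mathcal{X}}_j)_{ik}=\hat{\mathcal{X}}_{ijk}$. Consider all factorizations of the form $\hat{\mathcal{X}}_j=\mathbf{U}\mathbf{R}_j\mathbf{V}^\top$ for all $j=1,\dots,J$, where $D\in\mathbb{N}$ is arbitrary, $\mathbf{U}\in\mathbb{R}^{N_1\times D}$, $\mathbf{V}\in\mathbb{R}^{N_3\times D}$, and each $\mathbf{R}_j\in\mathbb{R}^{D\times D}$ is a real diagonal matrix. Then $$\min_{\substack{D,\ \mathbf{U},\mathbf{V},\mathbf{R}_1,\dots,\mathbf{R}_J:\\ \hat{\mathcal{X}}_j=\mathbf{U}\mathbf{R}_j\mathbf{V}^\top\ \forall j}}\ \frac{1}{4\sqrt{J}}\sum_{j=1}^{J}\Big(\|\mathbf{U}\mathbf{R}_j\|_F^2+\|\mathbf{V}\|_F^2+\|\mathbf{V}\mathbf{R}_j^\top\|_F^2+\|\mathbf{U}\|_F^2\Big)=\|\hat{\mathcal{X}}\|_*.$$ Moreover, every factorization attaining this minimum satisfies, for every $d\in\{1,\dots,D\}$, $$\|\mathbf{u}_{:d}\|_2\|\mathbf{r}_{:d}\|_2=\sqrt{J}\,\|\mathbf{v}_{:d}\|_2\quad\text{and}\quad \|\mathbf{v}_{:d}\|_2\|\mathbf{r}_{:d}\|_2=\sqrt{J}\,\|\mathbf{u}_{:d}\|_2,$$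 where $\mathbf{u}_{:d}$, $\mathbf{v}_{:d}$ are the $d$-th columns of $\mathbf{U}$, $\mathbf{V}$, and $\mathbf{r}_{:d}\in\mathbb{R}^J$ is the $d$-th column of the matrix $\widetilde{\mathbf{R}}\in\mathbb{R}^{J\times D}$ defined by $\widetilde{\mathbf{R}}(j,d)=\mathbf{R}_j(d,d)$.
   Context: $\|\cdot\|_F$ is the Frobenius norm and $\|\cdot\|_2$ the Euclidean norm. The tensor nuclear 2-norm of a real tensor $\mathcal{A}\in\mathbb{R}^{n_1}\otimes\mathbb{R}^{n_2}\otimes\mathbb{R}^{n_3}$ is $\|\mathcal{A}\|_*=\min\big\{\sum_{i=1}^r\|\mathbf{a}_{1,i}\|_2\|\mathbf{a}_{2,i}\|_2\|\mathbf{a}_{3,i}\|_2:\ \mathcal{A}=\sum_{i=1}^r\mathbf{a}_{1,i}\otimes\mathbf{a}_{2,i}\otimes\mathbf{a}_{3,i},\ r\in\mathbb{N},\ \mathbf{a}_{k,i}\in\mathbb{R}^{n_k}\big\}$, where $\otimes$ is the outer product. Note that $\hat{\mathcal{X}}_j=\mathbf{U}\mathbf{R}_j\mathbf{V}^\top$ for all $j$ is equivalent to $\hat{\mathcal{X}}=\sum_{d=1}^D\mathbf{u}_{:d}\otimes\mathbf{r}_{:d}\otimes\mathbf{v}_{:d}$. *)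

theory Defs
  imports Complex_Main
begin

(* Matrices of size m x n are represented as functions nat => nat => real,
   only entries with indices i < m, k < n are meaningful.
   Vectors of length n are functions nat => real, only entries < n matter. *)

definition mat_mul :: "nat \<Rightarrow> (nat \<Rightarrow> nat \<Rightarrow> real) \<Rightarrow> (nat \<Rightarrow> nat \<Rightarrow> real) \<Rightarrow> (nat \<Rightarrow> nat \<Rightarrow> real)" where
  "mat_mul n A B = (\<lambda>i k. \<Sum>l<n. A i l * B l k)"

definition diag_mat :: "(nat \<Rightarrow> real) \<Rightarrow> (nat \<Rightarrow> nat \<Rightarrow> real)" where
  "diag_mat r = (\<lambda>i k. if i = k then r i else 0)"

definition transp_mat :: "(nat \<Rightarrow> nat \<Rightarrow> real) \<Rightarrow> (nat \<Rightarrow> nat \<Rightarrow> real)" where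
  "transp_mat A = (\<lambda>i k. A k i)"

definition frob_sq :: "nat \<Rightarrow> nat \<Rightarrow> (nat \<Rightarrow> nat \<Rightarrow> real) \<Rightarrow> real" where
  "frob_sq m n A = (\<Sum>i<m. \<Sum>k<n. (A i k)\<^sup>2)"

definition vnorm :: "nat \<Rightarrow> (nat \<Rightarrow> real) \<Rightarrow> real" where
  "vnorm n x = sqrt (\<Sum>p<n. (x p)\<^sup>2)"

text \<open>Tensor nuclear 2-norm: infimum (the paper's min) of
  sum_i ||a1_i|| ||a2_i|| ||a3_i|| over all decompositions
  A = sum_{i<r} a1_i (x) a2_i (x) a3_i.\<close>
definition tensor_nuclear_norm ::
  "nat \<Rightarrow> nat \<Rightarrow> nat \<Rightarrow> (nat \<Rightarrow> nat \<Rightarrow> nat \<Rightarrow> real) \<Rightarrow> real" where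
  "tensor_nuclear_norm n1 n2 n3 A = Inf
     {(\<Sum>i<r. vnorm n1 (a1 i) * vnorm n2 (a2 i) * vnorm n3 (a3 i)) | (r::nat) (a1::nat\<Rightarrow>nat\<Rightarrow>real) (a2::nat\<Rightarrow>nat\<Rightarrow>real) (a3::nat\<Rightarrow>nat\<Rightarrow>real).
        \<forall>p<n1. \<forall>q<n2. \<forall>s<n3. A p q s = (\<Sum>i<r. a1 i p * a2 i q * a3 i s)}"

text \<open>Factorization X_j = U R_j V^T for all j < J, where R_j = diag (R j),
  i.e. R j d is the (d,d) entry of R_j (= tilde R (j,d)).
  X i j k is the (i,j,k) entry of the N1 x J x N3 tensor.\<close>
definition is_factorization ::
  "nat \<Rightarrow> nat \<Rightarrow> nat \<Rightarrow> (nat \<Rightarrow> nat \<Rightarrow> nat \<Rightarrow> real) \<Rightarrow> nat \<Rightarrow>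
   (nat \<Rightarrow> nat \<Rightarrow> real) \<Rightarrow> (nat \<Rightarrow> nat \<Rightarrow> real) \<Rightarrow> (nat \<Rightarrow> nat \<Rightarrow> real) \<Rightarrow> bool" where
  "is_factorization N1 J N3 X D U V R \<longleftrightarrow>
     (\<forall>j<J. \<forall>i<N1. \<forall>k<N3.
        X i j k = mat_mul D (mat_mul D U (diag_mat (R j))) (transp_mat V) i k)"

definition fact_objective ::
  "nat \<Rightarrow> nat \<Rightarrow> nat \<Rightarrow> nat \<Rightarrow>
   (nat \<Rightarrow> nat \<Rightarrow> real) \<Rightarrow> (nat \<Rightarrow> nat \<Rightarrow> real) \<Rightarrow> (nat \<Rightarrow> nat \<Rightarrow> real) \<Rightarrow> real" where
  "fact_objective N1 J N3 D U V R =
     1 / (4 * sqrt (real J)) *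
     (\<Sum>j<J. frob_sq N1 D (mat_mul D U (diag_mat (R j))) + frob_sq N3 D V
            + frob_sq N3 D (mat_mul D V (transp_mat (diag_mat (R j)))) + frob_sq N1 D U)"

end

theory Submission
  imports Defs "HOL-Analysis.Analysis"
begin

text \<open>Writing \<open>U R\<^sub>j V\<^sup>T\<close> as \<open>\<Sum>\<^sub>d u\<^sub>d \<otimes> r\<^sub>d \<otimes> v\<^sub>d\<close>, the objective equals the cost
  \<open>\<Sum>\<^sub>d |u\<^sub>d| |r\<^sub>d| |v\<^sub>d|\<close> of this rank-one decomposition plus the nonnegative defect
  \<open>1/(4\<surd>J) \<Sum>\<^sub>d ((|u\<^sub>d| |r\<^sub>d| - \<surd>J |v\<^sub>d|)\<^sup>2 + (|v\<^sub>d| |r\<^sub>d| - \<surd>J |u\<^sub>d|)\<^sup>2)\<close>.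
  Hence it dominates the nuclear norm, and at an optimum every defect vanishes. Conversely, the
  terms of a decomposition attaining the nuclear norm, with norm products \<open>P\<^sub>d\<close>, can be
  rescaled to \<open>|u\<^sub>d| = |v\<^sub>d| = \<surd>(P\<^sub>d/\<surd>J)\<close>, \<open>|r\<^sub>d| = \<surd>J\<close>, where the defect is zero. The nuclear norm is
  attained because, by Carath\'eodory's theorem, \<open>N\<^sub>1 J N\<^sub>3 + 1\<close> terms suffice, and after
  balancing the three factors of every term the relevant decompositions form a compact set.\<close>

lemma vnorm_nonneg: "vnorm n x \<ge> 0"
  unfolding vnorm_def by (simp add: sum_nonneg)

lemma power2_vnorm: "(vnorm n x)\<^sup>2 = (\<Sum>p<n. (x p)\<^sup>2)"
  unfolding vnorm_def by (simp add: sum_nonneg)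

lemma vnorm_scale: "vnorm n (\<lambda>p. c * x p) = \<bar>c\<bar> * vnorm n x"
proof -
  have "(\<Sum>p<n. (c * x p)\<^sup>2) = c\<^sup>2 * (\<Sum>p<n. (x p)\<^sup>2)"
    by (simp add: power_mult_distrib sum_distrib_left)
  then show ?thesis
    unfolding vnorm_def by (simp add: real_sqrt_mult)
qed

lemma vnorm_eq_0_imp: "vnorm n x = 0 \<Longrightarrow> p < n \<Longrightarrow> x p = 0"
  unfolding vnorm_def by (simp add: sum_nonneg sum_nonneg_eq_0_iff)

lemma abs_le_vnorm:
  assumes "p < n" shows "\<bar>x p\<bar> \<le> vnorm n x"
proof -
  have "(x p)\<^sup>2 \<le> (\<Sum>p<n. (x p)\<^sup>2)"
    using assms by (intro member_le_sum) auto
  then show ?thesis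
    unfolding vnorm_def by (metis real_sqrt_abs real_sqrt_le_mono)
qed

lemma vnorm_cong: "(\<And>p. p < n \<Longrightarrow> x p = y p) \<Longrightarrow> vnorm n x = vnorm n y"
  unfolding vnorm_def by (intro arg_cong[where f = sqrt] sum.cong) auto

lemma card_lt_imp_vanishing_combination:
  fixes v :: "'i \<Rightarrow> 'k \<Rightarrow> real"
  assumes "finite K" "finite I" "card K < card I"
  shows "\<exists>g. (\<forall>k\<in>K. (\<Sum>i\<in>I. g i * v i k) = 0) \<and> (\<exists>i\<in>I. g i \<noteq> 0)"
  using assms
proof (induction K arbitrary: I v rule: finite_induct)
  case empty
  then obtain i where "i \<in> I" by fastforce
  then show ?case by (intro exI[of _ "\<lambda>i'. if i' = i then 1 else 0"]) auto
next
  case (insert x K)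
  show ?case
  proof (cases "\<forall>i\<in>I. v i x = 0")
    case True
    from insert.IH[of I v] insert.prems insert.hyps obtain g
      where "\<forall>k\<in>K. (\<Sum>i\<in>I. g i * v i k) = 0" "\<exists>i\<in>I. g i \<noteq> 0"
      by auto
    with True show ?thesis by (intro exI[of _ g]) auto
  next
    case False
    then obtain j where j: "j \<in> I" "v j x \<noteq> 0" by auto
    txt \<open>Gaussian elimination: eliminate coordinate x using the vector v j.\<close>
    define w where "w i k = v i k - v i x / v j x * v j k" for i k
    have "card K < card (I - {j})"
      using j insert.prems insert.hyps by simp
    with insert.IH[of "I - {j}" w] insert.prems obtain g' where
      g': "\<forall>k\<in>K. (\<Sum>i\<in>I-{j}. g' i * w i k) = 0" "\<exists>i\<in>I-{j}. g' i \<noteq> 0" by auto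
    define g where "g i = (if i = j then - (\<Sum>i\<in>I-{j}. g' i * v i x) / v j x else g' i)" for i
    have comb: "(\<Sum>i\<in>I. g i * v i k) = (\<Sum>i\<in>I-{j}. g' i * w i k)" for k
    proof -
      have "(\<Sum>i\<in>I. g i * v i k) = g j * v j k + (\<Sum>i\<in>I-{j}. g' i * v i k)"
        using j insert.prems by (simp add: sum.remove g_def)
      moreover have "(\<Sum>i\<in>I-{j}. g' i * w i k) = (\<Sum>i\<in>I-{j}. g' i * v i k)
          - (\<Sum>i\<in>I-{j}. g' i * v i x) / v j x * v j k"
        unfolding w_def
        by (simp add: algebra_simps sum_subtractf sum_distrib_left sum_distrib_right sum_divide_distrib)
      ultimately show ?thesis unfolding g_def by simp
    qed
    show ?thesis
    proof (intro exI[of _ g] conjI)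
      show "\<forall>k\<in>insert x K. (\<Sum>i\<in>I. g i * v i k) = 0"
        using g'(1) j(2) by (auto simp: comb w_def)
      show "\<exists>i\<in>I. g i \<noteq> 0"
        using g'(2) unfolding g_def by auto
    qed
  qed
qed

lemma compact_PiE_UNIV:
  assumes "\<And>i. compact (S i)"
  shows "compact (PiE UNIV S :: ('a \<Rightarrow> 'b::topological_space) set)"
proof -
  have "compactin (product_topology (\<lambda>i. euclidean) UNIV) (PiE UNIV S)"
    by (simp add: compactin_PiE assms)
  then show ?thesis
    by (simp add: euclidean_product_topology)
qed

lemma compact_bounded_fun2: "compact {a :: 'a \<Rightarrow> 'b \<Rightarrow> real. \<forall>i p. \<bar>a i p\<bar> \<le> B}"
proof -
  have "{a :: 'a \<Rightarrow> 'b \<Rightarrow> real. \<forall>i p. \<bar>a i p\<bar> \<le> B} = PiE UNIV (\<lambda>_. PiE UNIV (\<lambda>_. {-B..B}))"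
    by (auto simp: PiE_def Pi_def abs_le_iff minus_le_iff)
  then show ?thesis
    by (simp add: compact_PiE_UNIV)
qed

lemma continuous_on_product_then_coordinatewise2 [continuous_intros]:
  fixes f :: "'a::topological_space \<Rightarrow> 'b \<Rightarrow> 'c \<Rightarrow> real"
  assumes "continuous_on S f"
  shows "continuous_on S (\<lambda>x. f x i p)"
  using continuous_on_product_then_coordinatewise[OF continuous_on_product_then_coordinatewise[OF assms]] .

context
  fixes n1 n2 n3 :: nat
begin

definition term_norm :: "('i \<Rightarrow> nat \<Rightarrow> real) \<Rightarrow> ('i \<Rightarrow> nat \<Rightarrow> real) \<Rightarrow> ('i \<Rightarrow> nat \<Rightarrow> real) \<Rightarrow> 'i \<Rightarrow> real"
  where "term_norm a b c i = vnorm n1 (a i) * vnorm n2 (b i) * vnorm n3 (c i)"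

definition cp_decomp :: "(nat \<Rightarrow> nat \<Rightarrow> nat \<Rightarrow> real) \<Rightarrow> 'i set \<Rightarrow>
    ('i \<Rightarrow> nat \<Rightarrow> real) \<Rightarrow> ('i \<Rightarrow> nat \<Rightarrow> real) \<Rightarrow> ('i \<Rightarrow> nat \<Rightarrow> real) \<Rightarrow> bool"
  where "cp_decomp A I a b c \<longleftrightarrow>
    (\<forall>p<n1. \<forall>q<n2. \<forall>s<n3. A p q s = (\<Sum>i\<in>I. a i p * b i q * c i s))"

definition cp_cost :: "'i set \<Rightarrow> ('i \<Rightarrow> nat \<Rightarrow> real) \<Rightarrow> ('i \<Rightarrow> nat \<Rightarrow> real) \<Rightarrow> ('i \<Rightarrow> nat \<Rightarrow> real) \<Rightarrow> real"
  where "cp_cost I a b c = (\<Sum>i\<in>I. term_norm a b c i)"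

lemma term_norm_nonneg: "term_norm a b c i \<ge> 0"
  unfolding term_norm_def by (intro mult_nonneg_nonneg vnorm_nonneg)

lemma cp_cost_nonneg: "cp_cost I a b c \<ge> 0"
  unfolding cp_cost_def by (intro sum_nonneg term_norm_nonneg)

lemma term_norm_eq_0_imp:
  "term_norm a b c i = 0 \<Longrightarrow> p < n1 \<Longrightarrow> q < n2 \<Longrightarrow> s < n3 \<Longrightarrow> a i p * b i q * c i s = 0"
  unfolding term_norm_def by (auto dest: vnorm_eq_0_imp)

lemma cp_decomp_rescale:
  assumes decomp: "cp_decomp A I a b c"
    and nonneg: "\<And>i. ta i \<ge> 0" "\<And>i. tb i \<ge> 0" "\<And>i. tc i \<ge> 0"
    and prod: "\<And>i. ta i * tb i * tc i = term_norm a b c i"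
    and null: "\<And>i. term_norm a b c i = 0 \<Longrightarrow> ta i = 0 \<and> tb i = 0 \<and> tc i = 0"
  obtains a' b' c' where "cp_decomp A I a' b' c'" "term_norm a' b' c' = term_norm a b c"
    "\<And>i. vnorm n1 (a' i) = ta i" "\<And>i. vnorm n2 (b' i) = tb i" "\<And>i. vnorm n3 (c' i) = tc i"
proof
  define a' where "a' i p = ta i / vnorm n1 (a i) * a i p" for i p
  define b' where "b' i p = tb i / vnorm n2 (b i) * b i p" for i p
  define c' where "c' i p = tc i / vnorm n3 (c i) * c i p" for i p
  have rescaled_norm: "vnorm n (\<lambda>p. t / vnorm n x * x p) = t"
    if "t \<ge> 0" "vnorm n x = 0 \<Longrightarrow> t = 0" for n t and x :: "nat \<Rightarrow> real"
    using that vnorm_nonneg[of n x] unfolding vnorm_scale by auto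
  show a': "vnorm n1 (a' i) = ta i" for i
    unfolding a'_def using nonneg null[of i] by (intro rescaled_norm) (auto simp: term_norm_def)
  show b': "vnorm n2 (b' i) = tb i" for i
    unfolding b'_def using nonneg null[of i] by (intro rescaled_norm) (auto simp: term_norm_def)
  show c': "vnorm n3 (c' i) = tc i" for i
    unfolding c'_def using nonneg null[of i] by (intro rescaled_norm) (auto simp: term_norm_def)
  show "term_norm a' b' c' = term_norm a b c"
    using prod by (auto simp: term_norm_def a' b' c')
  have "a' i p * b' i q * c' i s = a i p * b i q * c i s"
    if "p < n1" "q < n2" "s < n3" for i p q s
  proof (cases "term_norm a b c i = 0")
    case True
    then show ?thesis
      using term_norm_eq_0_imp[OF True that] unfolding a'_def b'_def c'_def by auto
  next
    case False
    have "a' i p * b' i q * c' i s = ta i * tb i * tc i / term_norm a b c i * (a i p * b i q * c i s)"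
      unfolding a'_def b'_def c'_def term_norm_def by (simp add: field_simps)
    then show ?thesis
      using False prod[of i] by simp
  qed
  with decomp show "cp_decomp A I a' b' c'"
    unfolding cp_decomp_def by simp
qed

lemma cp_decomp_remove_null_term:
  assumes "finite I" "cp_decomp A I a b c" "i \<in> I" "term_norm a b c i = 0"
  shows "cp_decomp A (I - {i}) a b c" "cp_cost (I - {i}) a b c = cp_cost I a b c"
  using assms term_norm_eq_0_imp[OF assms(4)]
  unfolding cp_decomp_def cp_cost_def by (simp_all add: sum.remove)

text \<open>While the scales \<open>1 - t g\<^sub>i / W\<^sub>i\<close> stay nonnegative the cost is linear in t, and
  \<open>\<Sum> g\<^sub>i = 0\<close> makes its slope vanish.\<close>
lemma cp_decomp_shift:
  assumes "finite I" and decomp: "cp_decomp A I a b c"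
    and pos: "\<And>i. i \<in> I \<Longrightarrow> term_norm a b c i > 0"
    and sum_g: "(\<Sum>i\<in>I. g i) = 0"
    and comb: "\<And>p q s. p < n1 \<Longrightarrow> q < n2 \<Longrightarrow> s < n3 \<Longrightarrow>
      (\<Sum>i\<in>I. g i * (a i p * b i q * c i s / term_norm a b c i)) = 0"
    and step: "\<And>i. i \<in> I \<Longrightarrow> t * g i \<le> term_norm a b c i"
  defines "a' \<equiv> \<lambda>i p. (1 - t * g i / term_norm a b c i) * a i p"
  shows "cp_decomp A I a' b c" "cp_cost I a' b c = cp_cost I a b c"
proof -
  let ?W = "term_norm a b c"
  have "(\<Sum>i\<in>I. a' i p * b i q * c i s) =
      (\<Sum>i\<in>I. a i p * b i q * c i s) - t * (\<Sum>i\<in>I. g i * (a i p * b i q * c i s / ?W i))"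
    for p q s
    unfolding a'_def by (simp add: algebra_simps sum_subtractf sum_distrib_left)
  with decomp comb show "cp_decomp A I a' b c"
    unfolding cp_decomp_def by simp
  have "term_norm a' b c i = ?W i - t * g i" if "i \<in> I" for i
  proof -
    have "t * g i / ?W i \<le> 1"
      using step[OF that] pos[OF that] by simp
    then have "term_norm a' b c i = (1 - t * g i / ?W i) * ?W i"
      unfolding a'_def term_norm_def vnorm_scale by simp
    then show ?thesis
      using pos[OF that] by (simp add: left_diff_distrib)
  qed
  then have "cp_cost I a' b c = (\<Sum>i\<in>I. ?W i) - t * (\<Sum>i\<in>I. g i)"
    unfolding cp_cost_def by (simp add: sum_subtractf sum_distrib_left)
  with sum_g show "cp_cost I a' b c = cp_cost I a b c"
    unfolding cp_cost_def by simp
qed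

text \<open>More than n1 n2 n3 + 1 normalized rank-one terms, extended by a constant coordinate 1,
  are linearly dependent; this is the affine dependence behind Carath\'eodory's theorem.\<close>
lemma rank_one_terms_affinely_dependent:
  assumes "finite I" "card I > n1 * n2 * n3 + 1"
  obtains g where "(\<Sum>i\<in>I. g i) = 0"
    "\<And>p q s. p < n1 \<Longrightarrow> q < n2 \<Longrightarrow> s < n3 \<Longrightarrow>
      (\<Sum>i\<in>I. g i * (a i p * b i q * c i s / term_norm a b c i)) = 0"
    "\<exists>i\<in>I. g i > 0"
proof -
  define K :: "(nat \<times> nat \<times> nat) option set"
    where "K = insert None (Some ` ({..<n1} \<times> {..<n2} \<times> {..<n3}))"
  define v where "v i k = (case k of None \<Rightarrow> 1
    | Some (p, q, s) \<Rightarrow> a i p * b i q * c i s / term_norm a b c i)" for i k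
  have "card K = n1 * n2 * n3 + 1"
    unfolding K_def by (simp add: card_image card_cartesian_product)
  moreover have "finite K"
    unfolding K_def by simp
  ultimately obtain g where g: "\<forall>k\<in>K. (\<Sum>i\<in>I. g i * v i k) = 0" "\<exists>i\<in>I. g i \<noteq> 0"
    using card_lt_imp_vanishing_combination[of K I v] assms by auto
  have "None \<in> K"
    unfolding K_def by simp
  from g(1)[rule_format, OF this] have sum_g: "(\<Sum>i\<in>I. g i) = 0"
    unfolding v_def by simp
  moreover have "(\<Sum>i\<in>I. g i * (a i p * b i q * c i s / term_norm a b c i)) = 0"
    if "p < n1" "q < n2" "s < n3" for p q s
  proof -
    have "Some (p, q, s) \<in> K"
      unfolding K_def using that by simp
    from g(1)[rule_format, OF this] show ?thesis
      unfolding v_def by simp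
  qed
  moreover have "\<exists>i\<in>I. g i > 0"
  proof (rule ccontr)
    assume "\<not> (\<exists>i\<in>I. g i > 0)"
    then have "\<forall>i\<in>I. g i = 0"
      using sum_nonneg_eq_0_iff[OF assms(1), of "\<lambda>i. - g i"] sum_g by (simp add: sum_negf not_less)
    with g(2) show False by blast
  qed
  ultimately show thesis
    using that by blast
qed

lemma cp_decomp_remove_term:
  assumes "finite I" "cp_decomp A I a b c" "card I > n1 * n2 * n3 + 1"
  shows "\<exists>j\<in>I. \<exists>a'. cp_decomp A (I - {j}) a' b c \<and> cp_cost (I - {j}) a' b c = cp_cost I a b c"
proof (cases "\<exists>j\<in>I. term_norm a b c j = 0")
  case True
  then show ?thesis
    using cp_decomp_remove_null_term[OF assms(1,2)] by blast
next
  case False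
  let ?W = "term_norm a b c"
  have pos: "?W i > 0" if "i \<in> I" for i
    using False that term_norm_nonneg[of a b c i] by (simp add: less_le)
  obtain g where sum_g: "(\<Sum>i\<in>I. g i) = 0"
    and comb: "\<And>p q s. p < n1 \<Longrightarrow> q < n2 \<Longrightarrow> s < n3 \<Longrightarrow>
      (\<Sum>i\<in>I. g i * (a i p * b i q * c i s / ?W i)) = 0"
    and "\<exists>i\<in>I. g i > 0"
    using rank_one_terms_affinely_dependent[OF assms(1,3)] by blast
  then obtain j where j: "is_arg_min (\<lambda>i. ?W i / g i) (\<lambda>i. i \<in> I \<and> g i > 0) j"
    using ex_is_arg_min_if_finite[of "{i \<in> I. g i > 0}" "\<lambda>i. ?W i / g i"] assms(1) by auto
  txt \<open>The largest step along g that keeps all scales nonnegative kills term j.\<close>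
  define t where "t = ?W j / g j"
  have jI: "j \<in> I" "g j > 0"
    using j unfolding is_arg_min_def by auto
  have step: "t * g i \<le> ?W i" if "i \<in> I" for i
  proof (cases "g i > 0")
    case True
    with j that have "t \<le> ?W i / g i"
      unfolding is_arg_min_def t_def by (meson not_less)
    with True show ?thesis by (simp add: field_simps)
  next
    case False
    have "t > 0"
      unfolding t_def using jI pos by simp
    with False have "t * g i \<le> 0"
      by (simp add: mult_nonneg_nonpos)
    with pos[OF that] show ?thesis
      by linarith
  qed
  define a' where "a' = (\<lambda>i p. (1 - t * g i / ?W i) * a i p)"
  have shifted: "cp_decomp A I a' b c" "cp_cost I a' b c = cp_cost I a b c"
    using cp_decomp_shift[OF assms(1,2) pos sum_g comb step] unfolding a'_def by simp_all
  have "term_norm a' b c j = 0"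
    unfolding a'_def term_norm_def t_def using jI pos by (simp add: vnorm_def)
  from cp_decomp_remove_null_term[OF assms(1) shifted(1) jI(1) this] shifted(2) jI(1)
  show ?thesis by auto
qed

lemma cp_decomp_card_le:
  assumes "finite I" "cp_decomp A I a b c"
  shows "\<exists>I'\<subseteq>I. \<exists>a'. card I' \<le> n1 * n2 * n3 + 1 \<and>
    cp_decomp A I' a' b c \<and> cp_cost I' a' b c = cp_cost I a b c"
  using assms
proof (induction "card I" arbitrary: I a rule: less_induct)
  case less
  show ?case
  proof (cases "card I \<le> n1 * n2 * n3 + 1")
    case True
    with less.prems show ?thesis
      by (intro exI[of _ I] conjI exI[of _ a]) simp_all
  next
    case False
    then obtain j a' where j: "j \<in> I" "cp_decomp A (I - {j}) a' b c"
      "cp_cost (I - {j}) a' b c = cp_cost I a b c"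
      using cp_decomp_remove_term[OF less.prems] by (meson not_le)
    have "card (I - {j}) < card I"
      using less.prems(1) j(1) by (rule card_Diff1_less)
    then obtain I' a'' where "I' \<subseteq> I - {j}" "card I' \<le> n1 * n2 * n3 + 1"
      "cp_decomp A I' a'' b c" "cp_cost I' a'' b c = cp_cost (I - {j}) a' b c"
      using less.hyps[of "I - {j}" a'] less.prems(1) j(2) by blast
    with j(3) show ?thesis
      by (intro exI[of _ I'] conjI exI[of _ a'']) auto
  qed
qed

lemma cp_decomp_standard:
  "\<exists>a b c. cp_decomp A ({..<n1} \<times> {..<n2} \<times> {..<n3}) a b c"
proof -
  define a b c :: "nat \<times> nat \<times> nat \<Rightarrow> nat \<Rightarrow> real"
    where "a = (\<lambda>(p', q', s') p. if p = p' then A p' q' s' else 0)"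
      and "b = (\<lambda>(p', q', s') q. if q = q' then 1 else 0)"
      and "c = (\<lambda>(p', q', s') s. if s = s' then 1 else 0)"
  have "cp_decomp A ({..<n1} \<times> {..<n2} \<times> {..<n3}) a b c"
    unfolding cp_decomp_def
  proof (intro allI impI)
    fix p q s assume "p < n1" "q < n2" "s < n3"
    then have "(\<Sum>i\<in>{..<n1} \<times> {..<n2} \<times> {..<n3}. if i = (p, q, s) then A p q s else 0) = A p q s"
      by (subst sum.delta) auto
    moreover have "(\<Sum>i\<in>{..<n1} \<times> {..<n2} \<times> {..<n3}. a i p * b i q * c i s) =
        (\<Sum>i\<in>{..<n1} \<times> {..<n2} \<times> {..<n3}. if i = (p, q, s) then A p q s else 0)"
      by (intro sum.cong refl) (auto simp: a_def b_def c_def split: if_splits)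
    ultimately show "A p q s = (\<Sum>i\<in>{..<n1} \<times> {..<n2} \<times> {..<n3}. a i p * b i q * c i s)"
      by simp
  qed
  then show ?thesis by blast
qed

lemma cp_decomp_balance:
  assumes "cp_decomp A I a b c"
  obtains a' b' c' where "cp_decomp A I a' b' c'" "term_norm a' b' c' = term_norm a b c"
    "\<And>i. vnorm n1 (a' i) = root 3 (term_norm a b c i)"
    "\<And>i. vnorm n2 (b' i) = root 3 (term_norm a b c i)"
    "\<And>i. vnorm n3 (c' i) = root 3 (term_norm a b c i)"
proof -
  let ?r = "\<lambda>i. root 3 (term_norm a b c i)"
  have cube: "?r i * ?r i * ?r i = term_norm a b c i" for i
    using real_root_pow_pos2[of 3 "term_norm a b c i"] term_norm_nonneg[of a b c i]
    by (simp add: power3_eq_cube)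
  show thesis
    by (rule cp_decomp_rescale[OF assms _ _ _ cube]) (auto simp: term_norm_nonneg intro: that)
qed

lemma cp_decomp_pad:
  assumes "finite I" "card I \<le> M" and decomp: "cp_decomp A I a b c" and "B \<ge> 0"
    and bound: "\<And>i. i \<in> I \<Longrightarrow> vnorm n1 (a i) \<le> B \<and> vnorm n2 (b i) \<le> B \<and> vnorm n3 (c i) \<le> B"
  obtains a' b' c' where "cp_decomp A {..<M} a' b' c'"
    "cp_cost {..<M} a' b' c' = cp_cost I a b c"
    "\<And>k p. \<bar>a' k p\<bar> \<le> B" "\<And>k p. \<bar>b' k p\<bar> \<le> B" "\<And>k p. \<bar>c' k p\<bar> \<le> B"
proof -
  let ?m = "card I"
  obtain h where h: "bij_betw h {..<?m} I"
    using ex_bij_betw_nat_finite[OF assms(1)] atLeast0LessThan by metis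
  then have hI: "h k \<in> I" if "k < ?m" for k
    using that by (auto simp: bij_betw_def)
  define pad where "pad n x k p = (if k < ?m \<and> p < n then x (h k) p else 0)"
    for n :: nat and x :: "_ \<Rightarrow> nat \<Rightarrow> real" and k p :: nat
  have sum_pad: "(\<Sum>k<M. if k < ?m then F (h k) else 0) = (\<Sum>i\<in>I. F i)" for F :: "_ \<Rightarrow> real"
  proof -
    have "(\<Sum>k<M. if k < ?m then F (h k) else 0) = (\<Sum>k<?m. F (h k))"
      using assms(2) by (subst sum.mono_neutral_right[of "{..<M}" "{..<?m}"]) auto
    also have "\<dots> = (\<Sum>i\<in>I. F i)"
      using sum.reindex_bij_betw[OF h] .
    finally show ?thesis .
  qed
  have vnorm_pad: "vnorm n (pad n x k) = (if k < ?m then vnorm n (x (h k)) else 0)" for n x k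
    unfolding pad_def by (cases "k < ?m") (auto simp: vnorm_def intro: vnorm_cong)
  have abs_pad: "\<bar>pad n x k p\<bar> \<le> B" if "\<And>i. i \<in> I \<Longrightarrow> vnorm n (x i) \<le> B" for n x k p
    unfolding pad_def using \<open>B \<ge> 0\<close> by (auto intro: order_trans[OF abs_le_vnorm] that hI)
  show thesis
  proof (rule that[of "pad n1 a" "pad n2 b" "pad n3 c"])
    show "cp_decomp A {..<M} (pad n1 a) (pad n2 b) (pad n3 c)"
      unfolding cp_decomp_def
    proof (intro allI impI)
      fix p q s assume pqs: "p < n1" "q < n2" "s < n3"
      have "(\<Sum>k<M. pad n1 a k p * pad n2 b k q * pad n3 c k s) =
          (\<Sum>k<M. if k < ?m then a (h k) p * b (h k) q * c (h k) s else 0)"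
        using pqs unfolding pad_def by (intro sum.cong) auto
      with decomp pqs show "A p q s = (\<Sum>k<M. pad n1 a k p * pad n2 b k q * pad n3 c k s)"
        unfolding cp_decomp_def sum_pad[of "\<lambda>i. a i p * b i q * c i s"] by simp
    qed
    have "term_norm (pad n1 a) (pad n2 b) (pad n3 c) k =
        (if k < ?m then term_norm a b c (h k) else 0)" for k
      unfolding term_norm_def vnorm_pad by simp
    then show "cp_cost {..<M} (pad n1 a) (pad n2 b) (pad n3 c) = cp_cost I a b c"
      unfolding cp_cost_def sum_pad[of "term_norm a b c", symmetric] by simp
  qed (use bound in \<open>auto intro: abs_pad\<close>)
qed

lemma cp_decomp_reduce_to_box:
  assumes "finite I" "cp_decomp A I a b c" "cp_cost I a b c \<le> C"
  obtains a' b' c' where "cp_decomp A {..<n1 * n2 * n3 + 1} a' b' c'"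
    "cp_cost {..<n1 * n2 * n3 + 1} a' b' c' = cp_cost I a b c"
    "\<And>k p. \<bar>a' k p\<bar> \<le> root 3 C" "\<And>k p. \<bar>b' k p\<bar> \<le> root 3 C" "\<And>k p. \<bar>c' k p\<bar> \<le> root 3 C"
proof -
  obtain I' a1 where I': "I' \<subseteq> I" "card I' \<le> n1 * n2 * n3 + 1" "cp_decomp A I' a1 b c"
    "cp_cost I' a1 b c = cp_cost I a b c"
    using cp_decomp_card_le[OF assms(1,2)] by blast
  obtain a2 b2 c2 where bal: "cp_decomp A I' a2 b2 c2" "term_norm a2 b2 c2 = term_norm a1 b c"
    "\<And>i. vnorm n1 (a2 i) = root 3 (term_norm a1 b c i)"
    "\<And>i. vnorm n2 (b2 i) = root 3 (term_norm a1 b c i)"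
    "\<And>i. vnorm n3 (c2 i) = root 3 (term_norm a1 b c i)"
    using cp_decomp_balance[OF I'(3)] by blast
  have fin: "finite I'"
    using I'(1) assms(1) by (rule finite_subset)
  have "term_norm a1 b c i \<le> C" if "i \<in> I'" for i
  proof -
    have "term_norm a1 b c i \<le> cp_cost I' a1 b c"
      unfolding cp_cost_def using fin that by (intro member_le_sum term_norm_nonneg)
    with I'(4) assms(3) show ?thesis by simp
  qed
  then have "root 3 (term_norm a1 b c i) \<le> root 3 C" if "i \<in> I'" for i
    using that by simp
  moreover have "root 3 C \<ge> 0"
    using assms(3) cp_cost_nonneg[of I a b c] by simp
  ultimately obtain a' b' c' where "cp_decomp A {..<n1 * n2 * n3 + 1} a' b' c'"
    "cp_cost {..<n1 * n2 * n3 + 1} a' b' c' = cp_cost I' a2 b2 c2"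
    "\<And>k p. \<bar>a' k p\<bar> \<le> root 3 C" "\<And>k p. \<bar>b' k p\<bar> \<le> root 3 C" "\<And>k p. \<bar>c' k p\<bar> \<le> root 3 C"
    using cp_decomp_pad[OF fin I'(2) bal(1), of "root 3 C"] bal(3-5) by metis
  moreover have "cp_cost I' a2 b2 c2 = cp_cost I a b c"
    using I'(4) bal(2) unfolding cp_cost_def by simp
  ultimately show thesis
    using that by simp
qed

lemma continuous_on_cp_cost:
  "continuous_on S (\<lambda>x. cp_cost {..<M} (fst x) (fst (snd x)) (snd (snd x)))"
  unfolding cp_cost_def term_norm_def vnorm_def by (intro continuous_intros)

lemma closed_cp_decomp:
  "closed {x. cp_decomp A {..<M} (fst x) (fst (snd x)) (snd (snd x))}"
proof -
  have closed_imp: "closed {x. P \<longrightarrow> Q x}" if "closed {x. Q x}" for P and Q :: "_ \<Rightarrow> bool"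
    using that by (cases P) auto
  show ?thesis
    unfolding cp_decomp_def
    by (intro closed_Collect_all closed_imp closed_Collect_eq continuous_intros)
qed

lemma cp_cost_minimum_exists:
  "\<exists>(r::nat) a b c. cp_decomp A {..<r} a b c \<and>
     (\<forall>(r'::nat) a' b' c'. cp_decomp A {..<r'} a' b' c' \<longrightarrow> cp_cost {..<r} a b c \<le> cp_cost {..<r'} a' b' c')"
proof -
  define M where "M = n1 * n2 * n3 + 1"
  let ?cost = "\<lambda>x. cp_cost {..<M} (fst x) (fst (snd x)) (snd (snd x))"
  obtain a0 b0 c0 where decomp0: "cp_decomp A ({..<n1} \<times> {..<n2} \<times> {..<n3}) a0 b0 c0"
    using cp_decomp_standard by blast
  define C where "C = cp_cost ({..<n1} \<times> {..<n2} \<times> {..<n3}) a0 b0 c0"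
  define Box where "Box = {a :: nat \<Rightarrow> nat \<Rightarrow> real. \<forall>i p. \<bar>a i p\<bar> \<le> root 3 C}"
  define K where "K = (Box \<times> Box \<times> Box) \<inter> {x. cp_decomp A {..<M} (fst x) (fst (snd x)) (snd (snd x))}"
  have into_K: "\<exists>x\<in>K. ?cost x = cp_cost I a b c"
    if "finite I" "cp_decomp A I a b c" "cp_cost I a b c \<le> C" for I :: "'j set" and a b c
  proof -
    from cp_decomp_reduce_to_box[OF that] obtain a' b' c' where "cp_decomp A {..<M} a' b' c'"
      "cp_cost {..<M} a' b' c' = cp_cost I a b c"
      "\<And>k p. \<bar>a' k p\<bar> \<le> root 3 C" "\<And>k p. \<bar>b' k p\<bar> \<le> root 3 C" "\<And>k p. \<bar>c' k p\<bar> \<le> root 3 C"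
      unfolding M_def by blast
    then show ?thesis
      by (intro bexI[of _ "(a', b', c')"]) (auto simp: K_def Box_def)
  qed
  have "finite ({..<n1} \<times> {..<n2} \<times> {..<n3})"
    by simp
  from into_K[OF this decomp0] obtain x0 where x0: "x0 \<in> K" "?cost x0 \<le> C"
    unfolding C_def by auto
  have "compact K"
    unfolding K_def Box_def
    by (intro compact_Int_closed compact_Times compact_bounded_fun2 closed_cp_decomp)
  moreover have "K \<noteq> {}"
    using x0(1) by blast
  ultimately obtain xmin where xmin: "xmin \<in> K" "\<And>y. y \<in> K \<Longrightarrow> ?cost xmin \<le> ?cost y"
    using continuous_attains_inf[OF _ _ continuous_on_cp_cost] by meson
  have "?cost xmin \<le> cp_cost {..<r'} a' b' c'" if "cp_decomp A {..<r'} a' b' c'" for r' :: nat and a' b' c'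
  proof (cases "cp_cost {..<r'} a' b' c' \<le> C")
    case True
    from into_K[OF finite_lessThan that True] obtain y where "y \<in> K" "?cost y = cp_cost {..<r'} a' b' c'"
      by blast
    with xmin(2) show ?thesis by fastforce
  next
    case False
    with xmin(2)[OF x0(1)] x0(2) show ?thesis by simp
  qed
  moreover have "cp_decomp A {..<M} (fst xmin) (fst (snd xmin)) (snd (snd xmin))"
    using xmin(1) unfolding K_def by blast
  ultimately show ?thesis
    by (intro exI[of _ M] exI[of _ "fst xmin"] exI[of _ "fst (snd xmin)"] exI[of _ "snd (snd xmin)"]) simp
qed

lemma tensor_nuclear_norm_eq_Inf_cp_cost:
  "tensor_nuclear_norm n1 n2 n3 A =
    Inf {cp_cost {..<r} a b c | (r::nat) a b c. cp_decomp A {..<r} a b c}"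
  unfolding tensor_nuclear_norm_def cp_cost_def term_norm_def cp_decomp_def by simp

lemma tensor_nuclear_norm_le_cp_cost:
  fixes r :: nat
  assumes "cp_decomp A {..<r} a b c"
  shows "tensor_nuclear_norm n1 n2 n3 A \<le> cp_cost {..<r} a b c"
  unfolding tensor_nuclear_norm_eq_Inf_cp_cost
  by (rule cInf_lower) (use assms cp_cost_nonneg in \<open>auto intro!: bdd_belowI[of _ 0]\<close>)

lemma tensor_nuclear_norm_attained:
  "\<exists>(r::nat) a b c. cp_decomp A {..<r} a b c \<and> cp_cost {..<r} a b c = tensor_nuclear_norm n1 n2 n3 A"
proof -
  obtain r :: nat and a b c where decomp: "cp_decomp A {..<r} a b c" and
    min: "\<And>(r'::nat) a' b' c'. cp_decomp A {..<r'} a' b' c' \<Longrightarrow> cp_cost {..<r} a b c \<le> cp_cost {..<r'} a' b' c'"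
    using cp_cost_minimum_exists[of A] by blast
  have "cp_cost {..<r} a b c \<le> tensor_nuclear_norm n1 n2 n3 A"
    unfolding tensor_nuclear_norm_eq_Inf_cp_cost
    by (rule cInf_greatest) (use decomp min in auto)
  with tensor_nuclear_norm_le_cp_cost[OF decomp] decomp show ?thesis
    by (intro exI[of _ r] exI[of _ a] exI[of _ b] exI[of _ c]) simp
qed

end

lemma mat_mul_diag_mat: "l < D \<Longrightarrow> mat_mul D U (diag_mat r) i l = U i l * r l"
  unfolding mat_mul_def diag_mat_def by (simp add: if_distrib cong: if_cong)

lemma transp_diag_mat: "transp_mat (diag_mat r) = diag_mat r"
  unfolding transp_mat_def diag_mat_def by (intro ext) auto

lemma mat_mul_diag_mat_transp:
  "mat_mul D (mat_mul D U (diag_mat r)) (transp_mat V) i k = (\<Sum>d<D. U i d * r d * V k d)"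
  unfolding mat_mul_def[of D "mat_mul D U (diag_mat r)"] transp_mat_def
  by (simp add: mat_mul_diag_mat)

lemma is_factorization_iff_cp_decomp:
  "is_factorization N1 J N3 X D U V R \<longleftrightarrow>
    cp_decomp N1 J N3 X {..<D} (\<lambda>d i. U i d) (\<lambda>d j. R j d) (\<lambda>d k. V k d)"
  unfolding is_factorization_def cp_decomp_def mat_mul_diag_mat_transp by auto

lemma frob_sq_by_columns: "frob_sq N D U = (\<Sum>d<D. (vnorm N (\<lambda>i. U i d))\<^sup>2)"
  unfolding frob_sq_def power2_vnorm by (rule sum.swap)

lemma frob_sq_mat_mul_diag_mat:
  "frob_sq N D (mat_mul D U (diag_mat r)) = (\<Sum>d<D. (r d)\<^sup>2 * (vnorm N (\<lambda>i. U i d))\<^sup>2)"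
proof -
  have "frob_sq N D (mat_mul D U (diag_mat r)) = frob_sq N D (\<lambda>i d. r d * U i d)"
    unfolding frob_sq_def by (simp add: mat_mul_diag_mat mult.commute)
  then show ?thesis
    unfolding frob_sq_by_columns vnorm_scale by (simp add: power_mult_distrib)
qed

lemma fact_objective_eq_column_norms:
  "fact_objective N1 J N3 D U V R = 1 / (4 * sqrt (real J)) *
    (\<Sum>d<D. (vnorm N1 (\<lambda>i. U i d))\<^sup>2 * (vnorm J (\<lambda>j. R j d))\<^sup>2 + real J * (vnorm N3 (\<lambda>k. V k d))\<^sup>2
      + (vnorm N3 (\<lambda>k. V k d))\<^sup>2 * (vnorm J (\<lambda>j. R j d))\<^sup>2 + real J * (vnorm N1 (\<lambda>i. U i d))\<^sup>2)"
proof -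
  have swap: "(\<Sum>j<J. frob_sq N D (mat_mul D W (diag_mat (R j)))) =
      (\<Sum>d<D. (vnorm N (\<lambda>i. W i d))\<^sup>2 * (vnorm J (\<lambda>j. R j d))\<^sup>2)" for N W
    unfolding frob_sq_mat_mul_diag_mat power2_vnorm[of J]
    by (subst sum.swap) (simp add: sum_distrib_left mult.commute)
  show ?thesis
    unfolding fact_objective_def sum.distrib swap transp_diag_mat
    by (simp add: frob_sq_by_columns sum_distrib_left)
qed

lemma fact_objective_eq_cp_cost_plus_defect:
  assumes "J > 0"
  shows "fact_objective N1 J N3 D U V R =
    cp_cost N1 J N3 {..<D} (\<lambda>d i. U i d) (\<lambda>d j. R j d) (\<lambda>d k. V k d) + 1 / (4 * sqrt (real J)) *
    (\<Sum>d<D. (vnorm N1 (\<lambda>i. U i d) * vnorm J (\<lambda>j. R j d) - sqrt (real J) * vnorm N3 (\<lambda>k. V k d))\<^sup>2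
          + (vnorm N3 (\<lambda>k. V k d) * vnorm J (\<lambda>j. R j d) - sqrt (real J) * vnorm N1 (\<lambda>i. U i d))\<^sup>2)"
proof -
  define s where "s = sqrt (real J)"
  have s: "s > 0" "real J = s\<^sup>2"
    unfolding s_def using assms by simp_all
  have identity: "u\<^sup>2 * r\<^sup>2 + s\<^sup>2 * v\<^sup>2 + v\<^sup>2 * r\<^sup>2 + s\<^sup>2 * u\<^sup>2 =
      ((u * r - s * v)\<^sup>2 + (v * r - s * u)\<^sup>2) + 4 * s * (u * r * v)" for u r v :: real
    by (simp add: power2_eq_square algebra_simps)
  show ?thesis
    unfolding fact_objective_eq_column_norms cp_cost_def term_norm_def s_def[symmetric] s(2)
      identity sum.distrib
    using s(1) by (simp add: sum_distrib_left field_simps)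
qed

lemma cp_cost_le_fact_objective:
  "cp_cost N1 J N3 {..<D} (\<lambda>d i. U i d) (\<lambda>d j. R j d) (\<lambda>d k. V k d) \<le> fact_objective N1 J N3 D U V R"
proof (cases "J = 0")
  case True
  then show ?thesis
    unfolding fact_objective_def cp_cost_def term_norm_def by (simp add: vnorm_def)
next
  case False
  then have "J > 0"
    by simp
  then show ?thesis
    unfolding fact_objective_eq_cp_cost_plus_defect[OF \<open>J > 0\<close>]
    by (intro add_increasing2 mult_nonneg_nonneg sum_nonneg add_nonneg_nonneg) auto
qed

lemma nuclear_norm_le_fact_objective:
  assumes "is_factorization N1 J N3 X D U V R"
  shows "tensor_nuclear_norm N1 J N3 X \<le> fact_objective N1 J N3 D U V R"
  using tensor_nuclear_norm_le_cp_cost[OF assms[unfolded is_factorization_iff_cp_decomp]]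
    cp_cost_le_fact_objective by (rule order_trans)

lemma fact_objective_attains_nuclear_norm:
  "\<exists>D U V R. is_factorization N1 J N3 X D U V R \<and>
    fact_objective N1 J N3 D U V R = tensor_nuclear_norm N1 J N3 X"
proof -
  obtain D :: nat and a b c where decomp: "cp_decomp N1 J N3 X {..<D} a b c"
    and opt: "cp_cost N1 J N3 {..<D} a b c = tensor_nuclear_norm N1 J N3 X"
    using tensor_nuclear_norm_attained by blast
  show ?thesis
  proof (cases "J = 0")
    case True
    with opt have "tensor_nuclear_norm N1 J N3 X = 0"
      unfolding cp_cost_def term_norm_def by (simp add: vnorm_def)
    with True show ?thesis
      unfolding is_factorization_def fact_objective_def by auto
  next
    case False
    then have "J > 0"
      by simp
    define s where "s = sqrt (real J)"
    have "s > 0"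
      unfolding s_def using \<open>J > 0\<close> by simp
    let ?P = "term_norm N1 J N3 a b c"
    define tu where "tu d = sqrt (?P d / s)" for d
    define tr where "tr d = (if ?P d = 0 then 0 else s)" for d
    have balanced: "tu d * tr d = s * tu d" for d
      unfolding tu_def tr_def by simp
    have "tu d * tr d * tu d = ?P d" for d
    proof -
      have "tu d * tu d = ?P d / s"
        unfolding tu_def using \<open>s > 0\<close> term_norm_nonneg[of N1 J N3 a b c d] by simp
      with \<open>s > 0\<close> show ?thesis
        by (simp add: balanced mult.assoc)
    qed
    moreover have "tu d \<ge> 0" "tr d \<ge> 0" for d
      unfolding tu_def tr_def using \<open>s > 0\<close> term_norm_nonneg[of N1 J N3 a b c d] by simp_all
    moreover have "tu d = 0 \<and> tr d = 0 \<and> tu d = 0" if "?P d = 0" for d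
      unfolding tu_def tr_def using that by simp
    ultimately obtain a' b' c' where decomp': "cp_decomp N1 J N3 X {..<D} a' b' c'"
      and norm': "term_norm N1 J N3 a' b' c' = ?P"
      and u: "\<And>d. vnorm N1 (a' d) = tu d" and r: "\<And>d. vnorm J (b' d) = tr d"
      and v: "\<And>d. vnorm N3 (c' d) = tu d"
      using cp_decomp_rescale[OF decomp, of tu tr tu] by blast
    define U V R where "U i d = a' d i" "V k d = c' d k" "R j d = b' d j" for i j k d
    have "is_factorization N1 J N3 X D U V R"
      using decomp' unfolding is_factorization_iff_cp_decomp U_V_R_def by simp
    moreover have "fact_objective N1 J N3 D U V R = tensor_nuclear_norm N1 J N3 X"
      using opt norm'
      unfolding fact_objective_eq_cp_cost_plus_defect[OF \<open>J > 0\<close>] U_V_R_def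
      by (simp add: u r v s_def[symmetric] cp_cost_def balanced)
    ultimately show ?thesis
      by blast
  qed
qed

lemma optimal_factorization_balanced:
  assumes fact: "is_factorization N1 J N3 X D U V R"
    and opt: "fact_objective N1 J N3 D U V R = tensor_nuclear_norm N1 J N3 X"
    and "d < D"
  shows "vnorm N1 (\<lambda>i. U i d) * vnorm J (\<lambda>j. R j d) = sqrt (real J) * vnorm N3 (\<lambda>k. V k d)"
    and "vnorm N3 (\<lambda>k. V k d) * vnorm J (\<lambda>j. R j d) = sqrt (real J) * vnorm N1 (\<lambda>i. U i d)"
proof -
  define defect where "defect d =
    (vnorm N1 (\<lambda>i. U i d) * vnorm J (\<lambda>j. R j d) - sqrt (real J) * vnorm N3 (\<lambda>k. V k d))\<^sup>2 +
    (vnorm N3 (\<lambda>k. V k d) * vnorm J (\<lambda>j. R j d) - sqrt (real J) * vnorm N1 (\<lambda>i. U i d))\<^sup>2" for d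
  have "defect d = 0"
  proof (cases "J = 0")
    case True
    then show ?thesis
      unfolding defect_def by (simp add: vnorm_def)
  next
    case False
    then have "J > 0"
      by simp
    have "tensor_nuclear_norm N1 J N3 X \<le> cp_cost N1 J N3 {..<D} (\<lambda>d i. U i d) (\<lambda>d j. R j d) (\<lambda>d k. V k d)"
      using fact unfolding is_factorization_iff_cp_decomp by (rule tensor_nuclear_norm_le_cp_cost)
    with opt have "1 / (4 * sqrt (real J)) * (\<Sum>d<D. defect d) \<le> 0"
      unfolding fact_objective_eq_cp_cost_plus_defect[OF \<open>J > 0\<close>] defect_def by linarith
    with \<open>J > 0\<close> have "(\<Sum>d<D. defect d) \<le> 0"
      by (simp add: divide_le_0_iff)
    moreover have "defect d' \<ge> 0" for d'
      unfolding defect_def by simp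
    ultimately show ?thesis
      using sum_nonneg_eq_0_iff[of "{..<D}" defect] sum_nonneg[of "{..<D}" defect] \<open>d < D\<close>
      by (simp add: antisym)
  qed
  then show "vnorm N1 (\<lambda>i. U i d) * vnorm J (\<lambda>j. R j d) = sqrt (real J) * vnorm N3 (\<lambda>k. V k d)"
    and "vnorm N3 (\<lambda>k. V k d) * vnorm J (\<lambda>j. R j d) = sqrt (real J) * vnorm N1 (\<lambda>i. U i d)"
    unfolding defect_def by (simp_all add: add_nonneg_eq_0_iff)
qed

theorem theorem1:
  fixes N1 J N3 :: nat and X :: "nat \<Rightarrow> nat \<Rightarrow> nat \<Rightarrow> real"
  shows "(\<exists>D U V R. is_factorization N1 J N3 X D U V R \<and>
            fact_objective N1 J N3 D U V R = tensor_nuclear_norm N1 J N3 X)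
       \<and> (\<forall>D U V R. is_factorization N1 J N3 X D U V R \<longrightarrow>
            tensor_nuclear_norm N1 J N3 X \<le> fact_objective N1 J N3 D U V R)
       \<and> (\<forall>D U V R. is_factorization N1 J N3 X D U V R \<and>
            fact_objective N1 J N3 D U V R = tensor_nuclear_norm N1 J N3 X \<longrightarrow>
            (\<forall>d<D.
               vnorm N1 (\<lambda>i. U i d) * vnorm J (\<lambda>j. R j d) = sqrt (real J) * vnorm N3 (\<lambda>k. V k d) \<and>
               vnorm N3 (\<lambda>k. V k d) * vnorm J (\<lambda>j. R j d) = sqrt (real J) * vnorm N1 (\<lambda>i. U i d)))"
  using optimal_factorization_balanced
  by (auto simp: fact_objective_attains_nuclear_norm nuclear_norm_le_fact_objective)

end
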